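(* Let $\mathcal{G}=(\mathcal{N},\mathcal{E})$ be a connected graph with $N$ nodes and $E$ edges, let $A\in\mathbb{R}^{E\times N}$ be its edge-node incidence matrix, and let $x\in\mathbb{R}^E$ be an arbitrary vector of line reactances (entries are not required to be positive). Let $p\in\mathbb{R}^N$ satisfy $\mathbf{1}^\top p=0$, and fix a reference node $r\in\mathcal{N}$ and a reference angle $\theta_r\in\mathbb{R}$. Consider the DC power flow equations $$A^\top f = p,\qquad \operatorname{diag}(x)\, f = A\theta,$$ in the unknowns $f\in\mathbb{R}^E$ and $\theta\in\mathbb{R}^N$, where the $r$-th entry of $\theta$ is required to equal $\theta_r$. Then these equations have a unique solution $(f,\theta)$ if and only if one of the following holds: (1) the graph is radial (has no cycles, so $E=N-1$); or (2) the graph is meshed (contains a cycle) and the $C\times C$ matrix $\mathbf{N}^\top\operatorname{diag}(x)\mathbf{N}$ is invertible, where $\mathbf{N}$ is the cycle matrix defined in the context.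
   Context: Incidence matrix: after assigning an arbitrary direction $e=(m,n)$ to each edge, $A_{e,k}=+1$ if $k=m$, $A_{e,k}=-1$ if $k=n$, and $A_{e,k}=0$ otherwise. For a connected graph $A\mathbf{1}=\mathbf{0}$ and $\operatorname{rank}(A)=N-1$. $\operatorname{diag}(x)$ is the diagonal matrix with diagonal $x$. Cycle matrix: a cycle is a closed sequence of adjacent edges; for a cycle $\mathcal{C}$ with a chosen traversal direction, its indicator vector $n^{\mathcal{C}}\in\{0,\pm1\}^E$ has $n^{\mathcal{C}}_e=0$ if $e$ is not in the cycle, $+1$ if $e$ is directed along the traversal direction, and $-1$ otherwise. A meshed graph has $C=E-N+1$ independent cycles; $\mathbf{N}\in\mathbb{R}^{E\times C}$ is obtained by stacking as columns the indicator vectors of $C$ independent cycles, so that $\operatorname{null}(A^\top)=\operatorname{range}(\mathbf{N})$. *)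

theory Defs
  imports "Jordan_Normal_Form.Matrix"
begin

text \<open>A (multi)graph with nodes 0..<N and edges 0..<E; edge e is given the
  arbitrary orientation from node src e to node tgt e (no self-loops).\<close>

definition graph_ok :: "nat \<Rightarrow> nat \<Rightarrow> (nat \<Rightarrow> nat) \<Rightarrow> (nat \<Rightarrow> nat) \<Rightarrow> bool" where
  "graph_ok N E src tgt \<longleftrightarrow> (\<forall>e<E. src e < N \<and> tgt e < N \<and> src e \<noteq> tgt e)"

definition adjacent :: "nat \<Rightarrow> (nat \<Rightarrow> nat) \<Rightarrow> (nat \<Rightarrow> nat) \<Rightarrow> nat \<Rightarrow> nat \<Rightarrow> bool" where
  "adjacent E src tgt u v \<longleftrightarrow>
     (\<exists>e<E. (src e = u \<and> tgt e = v) \<or> (src e = v \<and> tgt e = u))"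

definition connected_graph :: "nat \<Rightarrow> nat \<Rightarrow> (nat \<Rightarrow> nat) \<Rightarrow> (nat \<Rightarrow> nat) \<Rightarrow> bool" where
  "connected_graph N E src tgt \<longleftrightarrow> graph_ok N E src tgt \<and> N \<ge> 1 \<and>
     (\<forall>u<N. \<forall>v<N. (adjacent E src tgt)\<^sup>*\<^sup>* u v)"

definition incidence_matrix :: "nat \<Rightarrow> nat \<Rightarrow> (nat \<Rightarrow> nat) \<Rightarrow> (nat \<Rightarrow> nat) \<Rightarrow> real mat" where
  "incidence_matrix N E src tgt =
     mat E N (\<lambda>(e,k). if k = src e then 1 else if k = tgt e then -1 else 0)"

definition is_cycle :: "nat \<Rightarrow> (nat \<Rightarrow> nat) \<Rightarrow> (nat \<Rightarrow> nat) \<Rightarrow> nat list \<Rightarrow> nat list \<Rightarrow> bool" where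
  "is_cycle E src tgt vs es \<longleftrightarrow> length vs = length es \<and> length es \<ge> 1 \<and>
     distinct vs \<and> distinct es \<and>
     (\<forall>i<length es. es!i < E \<and>
        ((src (es!i) = vs!i \<and> tgt (es!i) = vs!((i+1) mod length vs)) \<or>
         (tgt (es!i) = vs!i \<and> src (es!i) = vs!((i+1) mod length vs))))"

definition has_cycle :: "nat \<Rightarrow> (nat \<Rightarrow> nat) \<Rightarrow> (nat \<Rightarrow> nat) \<Rightarrow> bool" where
  "has_cycle E src tgt \<longleftrightarrow> (\<exists>vs es. is_cycle E src tgt vs es)"

text \<open>Indicator vector of a cycle: +1 on edges directed along the traversal,
  -1 on edges directed against it, 0 on edges not in the cycle.\<close>
definition cycle_indicator :: "nat \<Rightarrow> (nat \<Rightarrow> nat) \<Rightarrow> (nat \<Rightarrow> nat) \<Rightarrow> nat list \<Rightarrow> nat list \<Rightarrow> real vec" where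
  "cycle_indicator E src tgt vs es = vec E (\<lambda>e.
     if \<exists>i<length es. es!i = e \<and> src e = vs!i then 1
     else if \<exists>i<length es. es!i = e \<and> tgt e = vs!i then -1
     else 0)"

definition cycle_matrix :: "nat \<Rightarrow> nat \<Rightarrow> (nat \<Rightarrow> nat) \<Rightarrow> (nat \<Rightarrow> nat) \<Rightarrow> real mat \<Rightarrow> bool" where
  "cycle_matrix N E src tgt Nm \<longleftrightarrow>
     Nm \<in> carrier_mat E (E + 1 - N) \<and>
     (\<forall>j<E + 1 - N. \<exists>vs es. is_cycle E src tgt vs es \<and>
                        col Nm j = cycle_indicator E src tgt vs es) \<and>
     (\<forall>c :: nat \<Rightarrow> real. (\<forall>e<E. (\<Sum>j<E + 1 - N. c j * Nm $$ (e, j)) = 0)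
                           \<longrightarrow> (\<forall>j<E + 1 - N. c j = 0))"

definition dc_pf_solution ::
  "nat \<Rightarrow> nat \<Rightarrow> (nat \<Rightarrow> nat) \<Rightarrow> (nat \<Rightarrow> nat) \<Rightarrow> real vec \<Rightarrow> real vec \<Rightarrow> nat \<Rightarrow> real
   \<Rightarrow> real vec \<Rightarrow> real vec \<Rightarrow> bool" where
  "dc_pf_solution N E src tgt x p r \<theta>r f \<theta> \<longleftrightarrow>
     f \<in> carrier_vec E \<and> \<theta> \<in> carrier_vec N \<and>
     transpose_mat (incidence_matrix N E src tgt) *\<^sub>v f = p \<and>
     mat_diag E (\<lambda>e. x $ e) *\<^sub>v f = incidence_matrix N E src tgt *\<^sub>v \<theta> \<and>
     \<theta> $ r = \<theta>r"

end

theory Submission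
  imports Defs "Jordan_Normal_Form.Determinant" "Jordan_Normal_Form.Matrix_Kernel"
begin

text \<open>Write \<open>A\<close> for the incidence matrix, \<open>Nm\<close> for the cycle matrix and \<open>X = diag x\<close>.
  Every cycle is balanced at every node, so \<open>A\<^sup>T Nm = 0\<close>. Together with connectivity
  (\<open>ker A\<close> consists of the constant vectors) and the independence of the cycles, this makes
  \<open>\<real>\<^sup>E\<close> the orthogonal direct sum of \<open>range A\<close> and \<open>range Nm\<close>; in particular
  \<open>ker A\<^sup>T = range Nm\<close> and \<open>ker Nm\<^sup>T = range A\<close>.

  Adding the reference angle \<open>\<theta>\<^sub>r\<close> to every node balance turns the power flow equations into a
  square linear system in \<open>(f, \<theta>)\<close>; summing the node rows recovers \<open>\<theta>\<^sub>r\<close> because the columns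
  of \<open>A\<^sup>T\<close> sum to zero. So the equations are uniquely solvable iff this system has trivial
  kernel. A kernel element has \<open>A\<^sup>T f = 0\<close>, hence \<open>f = Nm c\<close>, and \<open>X f = A \<theta>\<close> gives
  \<open>Nm\<^sup>T X Nm c = Nm\<^sup>T A \<theta> = 0\<close>. Conversely, if \<open>Nm\<^sup>T X Nm c = 0\<close> then \<open>X Nm c\<close> lies in
  \<open>range A\<close>, say \<open>X Nm c = A \<theta>\<close>, and \<open>(Nm c, \<theta> - \<theta>\<^sub>r)\<close> is a kernel element. Hence unique
  solvability is equivalent to the invertibility of \<open>Nm\<^sup>T X Nm\<close>, which holds vacuously for a
  radial graph, where there are no cycle columns.\<close>

section \<open>Linear algebra over a field\<close>

lemma mat_kernel_eq_zero_iff: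
  assumes "A \<in> carrier_mat m n"
  shows "mat_kernel A = {0\<^sub>v n} \<longleftrightarrow> (\<forall>v\<in>carrier_vec n. A *\<^sub>v v = 0\<^sub>v m \<longrightarrow> v = 0\<^sub>v n)"
  using assms by (auto simp: mat_kernel_def)

lemma mat_kernel_no_columns:
  assumes "A \<in> carrier_mat m 0"
  shows "mat_kernel A = {0\<^sub>v 0}"
  unfolding mat_kernel_eq_zero_iff[OF assms] by (auto simp: vec_eq_iff)

lemma invertible_mat_iff_inverse:
  assumes A: "A \<in> carrier_mat n n"
  shows "invertible_mat A \<longleftrightarrow> (\<exists>B\<in>carrier_mat n n. A * B = 1\<^sub>m n \<and> B * A = 1\<^sub>m n)"
proof
  assume "invertible_mat A"
  then obtain B where AB: "A * B = 1\<^sub>m n" and BA: "B * A = 1\<^sub>m (dim_row B)"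
    using A by (auto simp: invertible_mat_def inverts_mat_def)
  have "dim_row B = n" using arg_cong[OF BA, of dim_col] A by simp
  moreover have "dim_col B = n" using arg_cong[OF AB, of dim_col] by simp
  ultimately show "\<exists>B\<in>carrier_mat n n. A * B = 1\<^sub>m n \<and> B * A = 1\<^sub>m n" using AB BA by auto
next
  assume "\<exists>B\<in>carrier_mat n n. A * B = 1\<^sub>m n \<and> B * A = 1\<^sub>m n"
  then obtain B where "B \<in> carrier_mat n n" "A * B = 1\<^sub>m n" "B * A = 1\<^sub>m n" by blast
  with A show "invertible_mat A"
    unfolding invertible_mat_def inverts_mat_def by auto
qed

lemma invertible_mat_iff_det_nonzero:
  fixes A :: "'a::field mat"
  assumes A: "A \<in> carrier_mat n n"
  shows "invertible_mat A \<longleftrightarrow> det A \<noteq> 0"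
proof -
  have "invertible_mat A \<longleftrightarrow> A \<in> Units (ring_mat TYPE('a) n ())"
    unfolding invertible_mat_iff_inverse[OF A] using A
    by (simp add: Units_def ring_mat_simps conj_commute)
  then show ?thesis
    using unit_imp_det_non_zero[of A n "()"] det_non_zero_imp_unit[OF A, where b = "()"] by blast
qed

lemma invertible_mat_iff_mat_kernel_trivial:
  fixes A :: "'a::field mat"
  assumes A: "A \<in> carrier_mat n n"
  shows "invertible_mat A \<longleftrightarrow> mat_kernel A = {0\<^sub>v n}"
  unfolding invertible_mat_iff_det_nonzero[OF A] det_0_iff_vec_prod_zero_field[OF A]
    mat_kernel_eq_zero_iff[OF A] by auto

lemma mat_kernel_trivial_imp_surj:
  fixes A :: "'a::field mat"
  assumes A: "A \<in> carrier_mat n n" and ker: "mat_kernel A = {0\<^sub>v n}" and b: "b \<in> carrier_vec n"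
  obtains v where "v \<in> carrier_vec n" "A *\<^sub>v v = b"
proof -
  obtain B where B: "B \<in> carrier_mat n n" and AB: "A * B = 1\<^sub>m n"
    using ker unfolding invertible_mat_iff_mat_kernel_trivial[OF A, symmetric]
      invertible_mat_iff_inverse[OF A] by blast
  have "A *\<^sub>v (B *\<^sub>v b) = b"
    using assoc_mult_mat_vec[OF A B b, symmetric] AB b by simp
  with B b show thesis by (intro that[of "B *\<^sub>v b"]) auto
qed

text \<open>Pad \<open>A\<close> with zero rows to a square matrix: its kernel is still trivial, so it would be
  surjective, but its last row is zero.\<close>

lemma mat_kernel_trivial_imp_le:
  fixes A :: "'a::field mat"
  assumes A: "A \<in> carrier_mat m n" and ker: "mat_kernel A = {0\<^sub>v n}"
  shows "n \<le> m"
proof (rule ccontr)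
  assume "\<not> n \<le> m"
  define A' where "A' = mat n n (\<lambda>(i, j). if i < m then A $$ (i, j) else 0)"
  have A': "A' \<in> carrier_mat n n" unfolding A'_def by simp
  have row_A': "row A' i = row A i" if "i < m" for i
    using A that \<open>\<not> n \<le> m\<close> unfolding A'_def by (auto simp: row_def)
  have "mat_kernel A' = {0\<^sub>v n}"
    unfolding mat_kernel_eq_zero_iff[OF A']
  proof (intro ballI impI)
    fix v :: "'a vec" assume v: "v \<in> carrier_vec n" and A'v: "A' *\<^sub>v v = 0\<^sub>v n"
    have "A *\<^sub>v v = 0\<^sub>v m"
    proof (rule eq_vecI)
      fix i assume "i < dim_vec (0\<^sub>v m :: 'a vec)"
      then have i: "i < m" "i < n" using \<open>\<not> n \<le> m\<close> by auto
      have "row A i \<bullet> v = (A' *\<^sub>v v) $ i" using A' i row_A' by simp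
      then show "(A *\<^sub>v v) $ i = 0\<^sub>v m $ i" using A A'v i by simp
    qed (use A in simp)
    with ker v show "v = 0\<^sub>v n" using mat_kernel_eq_zero_iff[OF A] by blast
  qed
  then obtain v where v: "v \<in> carrier_vec n" and "A' *\<^sub>v v = unit_vec n (n - 1)"
    by (rule mat_kernel_trivial_imp_surj[OF A' _ unit_vec_carrier])
  then have "(A' *\<^sub>v v) $ (n - 1) = 1" using \<open>\<not> n \<le> m\<close> by simp
  moreover have "(A' *\<^sub>v v) $ (n - 1) = row A' (n - 1) \<bullet> v" using A' \<open>\<not> n \<le> m\<close> by simp
  moreover have "row A' (n - 1) = 0\<^sub>v n"
    using \<open>\<not> n \<le> m\<close> by (auto simp: A'_def row_def)
  ultimately show False using v by simp
qed

lemma unique_solution_iff_mat_kernel_trivial: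
  fixes A :: "'a::field mat"
  assumes A: "A \<in> carrier_mat n n" and b: "b \<in> carrier_vec n"
  shows "(\<exists>!v. v \<in> carrier_vec n \<and> A *\<^sub>v v = b) \<longleftrightarrow> mat_kernel A = {0\<^sub>v n}"
proof
  assume "\<exists>!v. v \<in> carrier_vec n \<and> A *\<^sub>v v = b"
  then obtain v where v: "v \<in> carrier_vec n" "A *\<^sub>v v = b"
    and uniq: "\<And>u. u \<in> carrier_vec n \<Longrightarrow> A *\<^sub>v u = b \<Longrightarrow> u = v" by blast
  show "mat_kernel A = {0\<^sub>v n}"
    unfolding mat_kernel_eq_zero_iff[OF A]
  proof (intro ballI impI)
    fix w :: "'a vec" assume w: "w \<in> carrier_vec n" and "A *\<^sub>v w = 0\<^sub>v n"
    then have "A *\<^sub>v (v + w) = b" using A v b by (simp add: mult_add_distrib_mat_vec)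
    then have "v + w = v" using v w by (intro uniq) auto
    then show "w = 0\<^sub>v n" using v w by (auto simp: vec_eq_iff)
  qed
next
  assume ker: "mat_kernel A = {0\<^sub>v n}"
  obtain v where v: "v \<in> carrier_vec n" "A *\<^sub>v v = b"
    using mat_kernel_trivial_imp_surj[OF A ker b] .
  moreover have "u = v" if "u \<in> carrier_vec n" "A *\<^sub>v u = b" for u
  proof -
    have "A *\<^sub>v (u - v) = 0\<^sub>v n"
      using A v that b by (simp add: mult_minus_distrib_mat_vec)
    moreover have "u - v \<in> carrier_vec n" using that v by simp
    ultimately have "u - v = 0\<^sub>v n" using ker mat_kernel_eq_zero_iff[OF A] by blast
    then show "u = v" using that v by (auto simp: vec_eq_iff)
  qed
  ultimately show "\<exists>!v. v \<in> carrier_vec n \<and> A *\<^sub>v v = b" by blast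
qed

lemma ex1_append_vec_iff:
  "(\<exists>!(v, w). v \<in> carrier_vec n \<and> w \<in> carrier_vec m \<and> P (v @\<^sub>v w)) \<longleftrightarrow>
   (\<exists>!u. u \<in> carrier_vec (n + m) \<and> P u)"
  (is "(\<exists>!vw. ?Q vw) \<longleftrightarrow> _")
proof
  assume "\<exists>!vw. ?Q vw"
  then obtain vw where Q: "?Q vw" and uniq: "\<And>y. ?Q y \<Longrightarrow> y = vw"
    by (rule ex1E) blast
  obtain v w where vw: "vw = (v, w)" by (cases vw)
  have "u = v @\<^sub>v w" if u: "u \<in> carrier_vec (n + m)" "P u" for u
  proof -
    have split: "vec_first u n @\<^sub>v vec_last u m = u" using u(1) by (rule vec_first_last_append)
    then have "?Q (vec_first u n, vec_last u m)" using u(2) by simp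
    then have "(vec_first u n, vec_last u m) = (v, w)" using uniq vw by blast
    with split show ?thesis by simp
  qed
  moreover have "v @\<^sub>v w \<in> carrier_vec (n + m)" "P (v @\<^sub>v w)" using Q vw by auto
  ultimately show "\<exists>!u. u \<in> carrier_vec (n + m) \<and> P u" by blast
next
  assume "\<exists>!u. u \<in> carrier_vec (n + m) \<and> P u"
  then obtain u where u: "u \<in> carrier_vec (n + m)" "P u"
    and uniq: "\<And>u'. u' \<in> carrier_vec (n + m) \<Longrightarrow> P u' \<Longrightarrow> u' = u" by blast
  have split: "vec_first u n @\<^sub>v vec_last u m = u" using u(1) by (rule vec_first_last_append)
  show "\<exists>!vw. ?Q vw"
  proof (rule ex1I[of _ "(vec_first u n, vec_last u m)"])
    show "?Q (vec_first u n, vec_last u m)" using split u by simp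
  next
    fix y assume y: "?Q y"
    obtain v w where y_def: "y = (v, w)" by (cases y)
    have v: "v \<in> carrier_vec n" and w: "w \<in> carrier_vec m" and P: "P (v @\<^sub>v w)"
      using y unfolding y_def by auto
    have "v @\<^sub>v w = vec_first u n @\<^sub>v vec_last u m"
      using uniq[OF _ P] v w split by simp
    then show "y = (vec_first u n, vec_last u m)"
      using v y_def append_vec_eq[OF v vec_first_carrier] by simp
  qed
qed

lemma zero_append_vec: "0\<^sub>v n @\<^sub>v 0\<^sub>v m = 0\<^sub>v (n + m)"
  by (rule eq_vecI) auto

lemma mult_mat_vec_zero_vec [simp]: "A *\<^sub>v 0\<^sub>v n = 0\<^sub>v (dim_row A)"
  by (rule eq_vecI) (auto simp: scalar_prod_def)

lemma zero_mat_mult_vec [simp]: "v \<in> carrier_vec nc \<Longrightarrow> 0\<^sub>m nr nc *\<^sub>v v = 0\<^sub>v nr"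
  by (rule eq_vecI) auto

lemma minus_eq_zero_vec_iff:
  fixes v w :: "'a::group_add vec"
  assumes "v \<in> carrier_vec n" and "w \<in> carrier_vec n"
  shows "v - w = 0\<^sub>v n \<longleftrightarrow> v = w"
  using assms by (auto simp: vec_eq_iff)

lemma mat_of_row_fun_unit_vec_mult_vec:
  fixes v :: "'a::semiring_1 vec"
  assumes "v \<in> carrier_vec n" and "i < n"
  shows "mat\<^sub>r m n (\<lambda>_. unit_vec n i) *\<^sub>v v = vec m (\<lambda>_. v $ i)"
  using assms by (intro eq_vecI) auto

lemma scalar_prod_self_eq_0_iff:
  fixes v :: "real vec"
  assumes "v \<in> carrier_vec n"
  shows "v \<bullet> v = 0 \<longleftrightarrow> v = 0\<^sub>v n"
  using conjugate_square_eq_0_vec[OF assms] by simp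

lemma orthogonal_summand_eq_0:
  fixes u w :: "real vec"
  assumes u: "u \<in> carrier_vec n" and w: "w \<in> carrier_vec n"
    and "u \<bullet> w = 0" and "u \<bullet> (u + w) = 0"
  shows "u = 0\<^sub>v n"
  using assms scalar_prod_add_distrib[OF u u w] scalar_prod_self_eq_0_iff[OF u] by simp

section \<open>The incidence matrix\<close>

lemma dim_incidence_matrix [simp]:
  "dim_row (incidence_matrix N E src tgt) = E" "dim_col (incidence_matrix N E src tgt) = N"
  by (simp_all add: incidence_matrix_def)

lemma incidence_matrix_carrier [simp]: "incidence_matrix N E src tgt \<in> carrier_mat E N"
  by (simp add: carrier_matI)

lemma incidence_matrix_mult_vec_carrier [simp]:
  "incidence_matrix N E src tgt *\<^sub>v \<theta> \<in> carrier_vec E"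
  by (simp add: carrier_vecI)

lemma transpose_incidence_matrix_mult_vec_carrier [simp]:
  "transpose_mat (incidence_matrix N E src tgt) *\<^sub>v f \<in> carrier_vec N"
  by (simp add: carrier_vecI)

lemma incidence_matrix_mult_vec:
  assumes G: "graph_ok N E src tgt" and \<theta>: "\<theta> \<in> carrier_vec N" and e: "e < E"
  shows "(incidence_matrix N E src tgt *\<^sub>v \<theta>) $ e = \<theta> $ src e - \<theta> $ tgt e"
proof -
  have ends: "src e < N" "tgt e < N" "src e \<noteq> tgt e" using G e by (auto simp: graph_ok_def)
  have "(incidence_matrix N E src tgt *\<^sub>v \<theta>) $ e =
      (\<Sum>k\<in>{0..<N}. (if k = src e then 1 else if k = tgt e then -1 else 0) * \<theta> $ k)"
    using \<theta> e by (simp add: incidence_matrix_def scalar_prod_def)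
  also have "\<dots> = (\<Sum>k\<in>{0..<N}. (if k = src e then \<theta> $ src e else 0) - (if k = tgt e then \<theta> $ tgt e else 0))"
    by (rule sum.cong) (use ends in auto)
  also have "\<dots> = \<theta> $ src e - \<theta> $ tgt e"
    using ends by (simp add: sum_subtractf)
  finally show ?thesis .
qed

lemma incidence_matrix_mult_const:
  assumes "graph_ok N E src tgt"
  shows "incidence_matrix N E src tgt *\<^sub>v vec N (\<lambda>_. c) = 0\<^sub>v E"
proof -
  have "src e < N \<and> tgt e < N" if "e < E" for e using assms that by (auto simp: graph_ok_def)
  then show ?thesis
    using incidence_matrix_mult_vec[OF assms] by (intro eq_vecI) auto
qed

lemma sum_transpose_incidence_mult_vec:
  assumes "graph_ok N E src tgt" and f: "f \<in> carrier_vec E"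
  shows "(\<Sum>k<N. (transpose_mat (incidence_matrix N E src tgt) *\<^sub>v f) $ k) = 0"
proof -
  let ?A = "incidence_matrix N E src tgt" and ?one = "vec N (\<lambda>_. 1 :: real)"
  have "(\<Sum>k<N. (transpose_mat ?A *\<^sub>v f) $ k) = (transpose_mat ?A *\<^sub>v f) \<bullet> ?one"
    by (simp add: scalar_prod_def lessThan_atLeast0)
  also have "\<dots> = f \<bullet> (?A *\<^sub>v ?one)"
    using f by (intro transpose_vec_mult_scalar) auto
  also have "\<dots> = 0"
    using f incidence_matrix_mult_const[OF assms(1)] by simp
  finally show ?thesis .
qed

lemma incidence_kernel_const:
  assumes G: "connected_graph N E src tgt" and \<theta>: "\<theta> \<in> carrier_vec N"
    and A\<theta>: "incidence_matrix N E src tgt *\<^sub>v \<theta> = 0\<^sub>v E" and "u < N" "v < N"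
  shows "\<theta> $ u = \<theta> $ v"
proof -
  have ok: "graph_ok N E src tgt" using G by (simp add: connected_graph_def)
  have step: "\<theta> $ a = \<theta> $ b" if adj: "adjacent E src tgt a b" for a b
  proof -
    obtain e where "e < E" and "(src e = a \<and> tgt e = b) \<or> (src e = b \<and> tgt e = a)"
      using adj by (auto simp: adjacent_def)
    moreover have "\<theta> $ src e - \<theta> $ tgt e = 0"
      using incidence_matrix_mult_vec[OF ok \<theta> \<open>e < E\<close>] A\<theta> \<open>e < E\<close> by simp
    ultimately show ?thesis by auto
  qed
  have "(adjacent E src tgt)\<^sup>*\<^sup>* u v"
    using G \<open>u < N\<close> \<open>v < N\<close> by (simp add: connected_graph_def)
  then show ?thesis by (induction rule: rtranclp_induct) (auto dest: step)
qed

lemma sum_rotate_mod: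
  fixes h :: "nat \<Rightarrow> 'a::comm_monoid_add"
  assumes "0 < L"
  shows "(\<Sum>i<L. h ((i + 1) mod L)) = (\<Sum>i<L. h i)"
proof -
  obtain m where L: "L = Suc m" using assms by (cases L) auto
  have "(\<Sum>i<L. h ((i + 1) mod L)) = (\<Sum>i<m. h ((i + 1) mod L)) + h ((m + 1) mod L)"
    unfolding L by simp
  also have "(\<Sum>i<m. h ((i + 1) mod L)) = (\<Sum>i<m. h (Suc i))"
    by (rule sum.cong) (auto simp: L)
  also have "h ((m + 1) mod L) = h 0" by (simp add: L)
  also have "(\<Sum>i<m. h (Suc i)) + h 0 = (\<Sum>i<L. h i)"
    unfolding L sum.lessThan_Suc_shift by (simp add: add.commute)
  finally show ?thesis .
qed

text \<open>Whatever its orientation, the \<open>i\<close>-th edge of a cycle contributes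
  \<open>\<delta>(vs!i) - \<delta>(vs!(i+1))\<close> to the node balance, and these terms telescope around the cycle.\<close>

lemma transpose_incidence_mult_cycle_indicator:
  assumes G: "graph_ok N E src tgt" and cyc: "is_cycle E src tgt vs es"
  shows "transpose_mat (incidence_matrix N E src tgt) *\<^sub>v cycle_indicator E src tgt vs es = 0\<^sub>v N"
proof (rule eq_vecI)
  fix k assume "k < dim_vec (0\<^sub>v N :: real vec)"
  then have k: "k < N" by simp
  let ?L = "length es"
  let ?ind = "\<lambda>e. cycle_indicator E src tgt vs es $ e"
  let ?a = "\<lambda>e. if k = src e then 1 else if k = tgt e then -1 else 0 :: real"
  let ?\<delta> = "\<lambda>v. if k = v then 1 else 0 :: real"
  from cyc have L: "0 < ?L" and des: "distinct es"
    and edge: "\<And>i. i < ?L \<Longrightarrow> es!i < E \<and>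
        ((src (es!i) = vs!i \<and> tgt (es!i) = vs!((i+1) mod ?L)) \<or>
         (tgt (es!i) = vs!i \<and> src (es!i) = vs!((i+1) mod ?L)))"
    unfolding is_cycle_def by auto
  have "cycle_indicator E src tgt vs es \<in> carrier_vec E" by (simp add: cycle_indicator_def)
  then have "(transpose_mat (incidence_matrix N E src tgt) *\<^sub>v cycle_indicator E src tgt vs es) $ k
      = (\<Sum>e<E. ?a e * ?ind e)"
    using k by (simp add: incidence_matrix_def scalar_prod_def lessThan_atLeast0)
  also have "\<dots> = (\<Sum>e\<in>set es. ?a e * ?ind e)"
  proof (rule sum.mono_neutral_cong_right)
    show "set es \<subseteq> {..<E}" using edge by (auto simp: in_set_conv_nth)
    show "\<forall>e\<in>{..<E} - set es. ?a e * ?ind e = 0"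
      by (auto simp: cycle_indicator_def in_set_conv_nth)
  qed auto
  also have "\<dots> = (\<Sum>i<?L. ?a (es!i) * ?ind (es!i))"
    by (rule sum.reindex_bij_betw[symmetric], rule bij_betw_nth[OF des]) auto
  also have "\<dots> = (\<Sum>i<?L. ?\<delta> (vs!i) - ?\<delta> (vs!((i+1) mod ?L)))"
  proof (rule sum.cong)
    fix i assume "i \<in> {..<?L}"
    then have i: "i < ?L" by simp
    have "es!i' = es!i \<longleftrightarrow> i' = i" if "i' < ?L" for i'
      using des i that by (simp add: nth_eq_iff_index_eq)
    then have "?ind (es!i) = (if src (es!i) = vs!i then 1 else if tgt (es!i) = vs!i then -1 else 0)"
      using edge[OF i] i by (auto simp: cycle_indicator_def)
    moreover have "src (es!i) \<noteq> tgt (es!i)" using G edge[OF i] by (simp add: graph_ok_def)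
    ultimately show "?a (es!i) * ?ind (es!i) = ?\<delta> (vs!i) - ?\<delta> (vs!((i+1) mod ?L))"
      using edge[OF i] by auto
  qed simp
  also have "\<dots> = 0"
    using sum_rotate_mod[OF L, of "\<lambda>i. ?\<delta> (vs!i)"] by (simp add: sum_subtractf)
  finally show "(transpose_mat (incidence_matrix N E src tgt) *\<^sub>v cycle_indicator E src tgt vs es) $ k
      = 0\<^sub>v N $ k" using k by simp
qed simp

section \<open>Cut space and cycle space\<close>

locale cycle_matrix_graph =
  fixes N E :: nat and src tgt :: "nat \<Rightarrow> nat" and Nm :: "real mat"
  assumes connected: "connected_graph N E src tgt"
    and cycle_matrix: "cycle_matrix N E src tgt Nm"
begin

abbreviation A :: "real mat" where "A \<equiv> incidence_matrix N E src tgt"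

abbreviation C :: nat where "C \<equiv> E + 1 - N"

lemma graph_ok: "graph_ok N E src tgt"
  using connected by (simp add: connected_graph_def)

lemma nodes_pos: "0 < N"
  using connected by (simp add: connected_graph_def)

lemma cycle_matrix_carrier: "Nm \<in> carrier_mat E C"
  using cycle_matrix by (simp add: cycle_matrix_def)

lemma dim_cycle_matrix [simp]: "dim_row Nm = E" "dim_col Nm = C"
  using cycle_matrix_carrier by auto

lemma cycle_matrix_mult_vec_carrier [simp]: "Nm *\<^sub>v v \<in> carrier_vec E"
  by (simp add: carrier_vecI)

lemma no_cycle_imp_no_cycle_columns:
  assumes "\<not> has_cycle E src tgt"
  shows "C = 0"
proof (rule ccontr)
  assume "C \<noteq> 0"
  then have "0 < C" by simp
  then obtain vs es where "is_cycle E src tgt vs es"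
    using cycle_matrix unfolding cycle_matrix_def by blast
  with assms show False by (auto simp: has_cycle_def)
qed

lemma transpose_incidence_mult_cycle_matrix: "transpose_mat A * Nm = 0\<^sub>m N C"
proof (rule eq_matI)
  fix k j assume "k < dim_row (0\<^sub>m N C :: real mat)" "j < dim_col (0\<^sub>m N C :: real mat)"
  then have k: "k < N" and j: "j < C" by auto
  obtain vs es where cyc: "is_cycle E src tgt vs es"
    and col: "col Nm j = cycle_indicator E src tgt vs es"
    using cycle_matrix j unfolding cycle_matrix_def by blast
  have "(transpose_mat A * Nm) $$ (k, j) = (transpose_mat A *\<^sub>v col Nm j) $ k"
    using k j by simp
  also have "\<dots> = 0"
    unfolding col transpose_incidence_mult_cycle_indicator[OF graph_ok cyc] using k by simp
  finally show "(transpose_mat A * Nm) $$ (k, j) = 0\<^sub>m N C $$ (k, j)" using k j by simp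
qed auto

lemma transpose_cycle_matrix_mult_incidence: "transpose_mat Nm * A = 0\<^sub>m C N"
proof -
  have "transpose_mat (transpose_mat A * Nm) = transpose_mat Nm * A"
    using transpose_mult[OF _ cycle_matrix_carrier, of "transpose_mat A" N] by simp
  then show ?thesis by (simp add: transpose_incidence_mult_cycle_matrix)
qed

lemma mat_kernel_cycle_matrix: "mat_kernel Nm = {0\<^sub>v C}"
  unfolding mat_kernel_eq_zero_iff[OF cycle_matrix_carrier]
proof (intro ballI impI)
  fix c :: "real vec" assume c: "c \<in> carrier_vec C" and Nc: "Nm *\<^sub>v c = 0\<^sub>v E"
  have "(\<Sum>j<C. c $ j * Nm $$ (e, j)) = 0" if "e < E" for e
  proof -
    have "(\<Sum>j<C. c $ j * Nm $$ (e, j)) = (Nm *\<^sub>v c) $ e"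
      using c that by (simp add: scalar_prod_def lessThan_atLeast0 mult.commute)
    then show ?thesis using Nc that by simp
  qed
  then have "\<forall>j<C. c $ j = 0"
    using cycle_matrix unfolding cycle_matrix_def by blast
  then show "c = 0\<^sub>v C" using c by (intro eq_vecI) auto
qed

lemma transpose_incidence_mult_cycle_vec:
  assumes c: "c \<in> carrier_vec C"
  shows "transpose_mat A *\<^sub>v (Nm *\<^sub>v c) = 0\<^sub>v N"
  using assoc_mult_mat_vec[of "transpose_mat A" N E Nm C c] c cycle_matrix_carrier
  by (simp add: transpose_incidence_mult_cycle_matrix)

lemma transpose_cycle_matrix_mult_incidence_vec:
  assumes \<theta>: "\<theta> \<in> carrier_vec N"
  shows "transpose_mat Nm *\<^sub>v (A *\<^sub>v \<theta>) = 0\<^sub>v C"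
  using assoc_mult_mat_vec[of "transpose_mat Nm" C E A N \<theta>] \<theta> cycle_matrix_carrier
  by (simp add: transpose_cycle_matrix_mult_incidence)

lemma incidence_orthogonal_cycle_matrix:
  assumes \<phi>: "\<phi> \<in> carrier_vec N" and c: "c \<in> carrier_vec C"
  shows "(Nm *\<^sub>v c) \<bullet> (A *\<^sub>v \<phi>) = 0"
proof -
  have "(Nm *\<^sub>v c) \<bullet> (A *\<^sub>v \<phi>) = (transpose_mat A *\<^sub>v (Nm *\<^sub>v c)) \<bullet> \<phi>"
    using \<phi> by (intro transpose_vec_mult_scalar[symmetric]) auto
  then show ?thesis using \<phi> c by (simp add: transpose_incidence_mult_cycle_vec)
qed

text \<open>Injectivity of \<open>(\<phi>, c) \<mapsto> (A \<phi> + Nm c, \<phi>\<^sub>0)\<close> yields \<open>N + C \<le> E + 1\<close>; as \<open>C = E + 1 - N\<close>, the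
  map is then square and hence also surjective.\<close>

definition potential_cycle_mat :: "real mat" where
  "potential_cycle_mat = four_block_mat A Nm (mat\<^sub>r 1 N (\<lambda>_. unit_vec N 0)) (0\<^sub>m 1 C)"

lemma potential_cycle_mat_carrier: "potential_cycle_mat \<in> carrier_mat (E + 1) (N + C)"
  unfolding potential_cycle_mat_def by (rule four_block_carrier_mat) auto

lemma potential_cycle_mat_mult_vec:
  assumes \<phi>: "\<phi> \<in> carrier_vec N" and c: "c \<in> carrier_vec C"
  shows "potential_cycle_mat *\<^sub>v (\<phi> @\<^sub>v c) = (A *\<^sub>v \<phi> + Nm *\<^sub>v c) @\<^sub>v vec 1 (\<lambda>_. \<phi> $ 0)"
proof -
  have "mat\<^sub>r 1 N (\<lambda>_. unit_vec N 0) \<in> carrier_mat 1 N" by (simp add: carrier_matI)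
  from four_block_mat_mult_vec[OF incidence_matrix_carrier cycle_matrix_carrier this
      zero_carrier_mat \<phi> c]
  show ?thesis
    unfolding potential_cycle_mat_def using c mat_of_row_fun_unit_vec_mult_vec[OF \<phi> nodes_pos]
    by simp
qed

lemma mat_kernel_potential_cycle_mat: "mat_kernel potential_cycle_mat = {0\<^sub>v (N + C)}"
  unfolding mat_kernel_eq_zero_iff[OF potential_cycle_mat_carrier]
proof (intro ballI impI)
  fix v :: "real vec"
  assume v: "v \<in> carrier_vec (N + C)" and v0: "potential_cycle_mat *\<^sub>v v = 0\<^sub>v (E + 1)"
  define \<phi> c where "\<phi> = vec_first v N" and "c = vec_last v C"
  have \<phi>: "\<phi> \<in> carrier_vec N" and c: "c \<in> carrier_vec C" unfolding \<phi>_def c_def by simp_all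
  have v_eq: "v = \<phi> @\<^sub>v c" unfolding \<phi>_def c_def using v by (rule vec_first_last_append[symmetric])
  have "(A *\<^sub>v \<phi> + Nm *\<^sub>v c) @\<^sub>v vec 1 (\<lambda>_. \<phi> $ 0) = 0\<^sub>v E @\<^sub>v 0\<^sub>v 1"
    using v0 unfolding v_eq potential_cycle_mat_mult_vec[OF \<phi> c] zero_append_vec .
  then have sum0: "A *\<^sub>v \<phi> + Nm *\<^sub>v c = 0\<^sub>v E" and ref: "vec 1 (\<lambda>_. \<phi> $ 0) = 0\<^sub>v 1"
    using append_vec_eq[OF _ zero_carrier_vec, of "A *\<^sub>v \<phi> + Nm *\<^sub>v c" E] by simp_all
  have \<phi>0: "\<phi> $ 0 = 0" using arg_cong[OF ref, of "\<lambda>w. w $ 0"] by simp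
  have "A *\<^sub>v \<phi> = 0\<^sub>v E"
  proof (rule orthogonal_summand_eq_0)
    show "(A *\<^sub>v \<phi>) \<bullet> (Nm *\<^sub>v c) = 0"
      using incidence_orthogonal_cycle_matrix[OF \<phi> c]
        comm_scalar_prod[of "A *\<^sub>v \<phi>" E "Nm *\<^sub>v c"] by simp
    show "(A *\<^sub>v \<phi>) \<bullet> (A *\<^sub>v \<phi> + Nm *\<^sub>v c) = 0" unfolding sum0 by simp
  qed simp_all
  then have "\<phi> $ k = 0" if "k < N" for k
    using incidence_kernel_const[OF connected \<phi> _ that nodes_pos] \<phi>0 by simp
  then have "\<phi> = 0\<^sub>v N" using \<phi> by (intro eq_vecI) auto
  moreover have "Nm *\<^sub>v c = 0\<^sub>v E" using sum0 \<open>A *\<^sub>v \<phi> = 0\<^sub>v E\<close> by simp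
  then have "c = 0\<^sub>v C"
    using c mat_kernel_cycle_matrix mat_kernel_eq_zero_iff[OF cycle_matrix_carrier] by blast
  ultimately show "v = 0\<^sub>v (N + C)" by (simp add: v_eq zero_append_vec)
qed

lemma nodes_le_Suc_edges: "N \<le> E + 1"
  using mat_kernel_trivial_imp_le[OF potential_cycle_mat_carrier mat_kernel_potential_cycle_mat]
  by simp

lemma incidence_cycle_decomposition:
  assumes y: "y \<in> carrier_vec E"
  obtains \<phi> c where "\<phi> \<in> carrier_vec N" "c \<in> carrier_vec C" "y = A *\<^sub>v \<phi> + Nm *\<^sub>v c"
proof -
  have NC: "N + C = E + 1" using nodes_le_Suc_edges by simp
  have square: "potential_cycle_mat \<in> carrier_mat (N + C) (N + C)"
    using potential_cycle_mat_carrier unfolding NC .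
  have "y @\<^sub>v 0\<^sub>v 1 \<in> carrier_vec (N + C)"
    unfolding NC using y by (rule append_carrier_vec) simp
  then obtain v where v: "v \<in> carrier_vec (N + C)"
    and v_sol: "potential_cycle_mat *\<^sub>v v = y @\<^sub>v 0\<^sub>v 1"
    using mat_kernel_trivial_imp_surj[OF square mat_kernel_potential_cycle_mat] by blast
  define \<phi> c where "\<phi> = vec_first v N" and "c = vec_last v C"
  have \<phi>: "\<phi> \<in> carrier_vec N" and c: "c \<in> carrier_vec C" unfolding \<phi>_def c_def by simp_all
  have v_eq: "v = \<phi> @\<^sub>v c" unfolding \<phi>_def c_def using v by (rule vec_first_last_append[symmetric])
  have "(A *\<^sub>v \<phi> + Nm *\<^sub>v c) @\<^sub>v vec 1 (\<lambda>_. \<phi> $ 0) = y @\<^sub>v 0\<^sub>v 1"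
    using v_sol unfolding v_eq potential_cycle_mat_mult_vec[OF \<phi> c] .
  then have "y = A *\<^sub>v \<phi> + Nm *\<^sub>v c"
    using append_vec_eq[OF _ y, of "A *\<^sub>v \<phi> + Nm *\<^sub>v c"] by simp
  with \<phi> c show thesis by (rule that)
qed

lemma transpose_incidence_kernel:
  assumes f: "f \<in> carrier_vec E" and ATf: "transpose_mat A *\<^sub>v f = 0\<^sub>v N"
  obtains c where "c \<in> carrier_vec C" "f = Nm *\<^sub>v c"
proof -
  obtain \<phi> c where \<phi>: "\<phi> \<in> carrier_vec N" and c: "c \<in> carrier_vec C"
    and f_eq: "f = A *\<^sub>v \<phi> + Nm *\<^sub>v c"
    using incidence_cycle_decomposition[OF f] .
  have "A *\<^sub>v \<phi> = 0\<^sub>v E"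
  proof (rule orthogonal_summand_eq_0)
    show "(A *\<^sub>v \<phi>) \<bullet> (Nm *\<^sub>v c) = 0"
      using incidence_orthogonal_cycle_matrix[OF \<phi> c]
        comm_scalar_prod[of "A *\<^sub>v \<phi>" E "Nm *\<^sub>v c"] by simp
    have "(transpose_mat A *\<^sub>v f) \<bullet> \<phi> = f \<bullet> (A *\<^sub>v \<phi>)"
      by (rule transpose_vec_mult_scalar[OF incidence_matrix_carrier \<phi> f])
    then show "(A *\<^sub>v \<phi>) \<bullet> (A *\<^sub>v \<phi> + Nm *\<^sub>v c) = 0"
      using ATf \<phi> f comm_scalar_prod[OF f, of "A *\<^sub>v \<phi>"] by (simp add: f_eq[symmetric])
  qed simp_all
  with f_eq c show thesis by (intro that) auto
qed

lemma transpose_cycle_matrix_kernel: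
  assumes y: "y \<in> carrier_vec E" and NTy: "transpose_mat Nm *\<^sub>v y = 0\<^sub>v C"
  obtains \<phi> where "\<phi> \<in> carrier_vec N" "y = A *\<^sub>v \<phi>"
proof -
  obtain \<phi> c where \<phi>: "\<phi> \<in> carrier_vec N" and c: "c \<in> carrier_vec C"
    and y_eq: "y = A *\<^sub>v \<phi> + Nm *\<^sub>v c"
    using incidence_cycle_decomposition[OF y] .
  have "Nm *\<^sub>v c = 0\<^sub>v E"
  proof (rule orthogonal_summand_eq_0)
    show "(Nm *\<^sub>v c) \<bullet> (A *\<^sub>v \<phi>) = 0" by (rule incidence_orthogonal_cycle_matrix[OF \<phi> c])
    have "(transpose_mat Nm *\<^sub>v y) \<bullet> c = y \<bullet> (Nm *\<^sub>v c)"
      by (rule transpose_vec_mult_scalar[OF cycle_matrix_carrier c y])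
    moreover have "Nm *\<^sub>v c + A *\<^sub>v \<phi> = y" unfolding y_eq by (rule comm_add_vec[of _ E]) simp_all
    ultimately show "(Nm *\<^sub>v c) \<bullet> (Nm *\<^sub>v c + A *\<^sub>v \<phi>) = 0"
      using NTy c y comm_scalar_prod[of y E "Nm *\<^sub>v c"] by simp
  qed simp_all
  with y_eq \<phi> show thesis by (intro that) auto
qed

section \<open>The DC power flow system\<close>

text \<open>The first \<open>N\<close> rows are the node balances \<open>A\<^sup>T f + \<theta> $ r = p + \<theta>r\<close>, the last \<open>E\<close> rows
  the branch laws \<open>X f - A \<theta> = 0\<close>; unknowns are ordered as \<open>f @\<^sub>v \<theta>\<close>.\<close>

definition power_flow_mat :: "real mat \<Rightarrow> nat \<Rightarrow> real mat" where
  "power_flow_mat X r = four_block_mat (transpose_mat A) (mat\<^sub>r N N (\<lambda>_. unit_vec N r)) X (- A)"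

lemma power_flow_mat_carrier:
  assumes "X \<in> carrier_mat E E"
  shows "power_flow_mat X r \<in> carrier_mat (N + E) (E + N)"
  unfolding power_flow_mat_def by (rule four_block_carrier_mat) (simp_all add: uminus_carrier_mat)

lemma power_flow_mat_mult_vec:
  assumes X: "X \<in> carrier_mat E E" and r: "r < N"
    and f: "f \<in> carrier_vec E" and \<theta>: "\<theta> \<in> carrier_vec N"
  shows "power_flow_mat X r *\<^sub>v (f @\<^sub>v \<theta>) =
    (transpose_mat A *\<^sub>v f + vec N (\<lambda>_. \<theta> $ r)) @\<^sub>v (X *\<^sub>v f - A *\<^sub>v \<theta>)"
proof -
  have "mat\<^sub>r N N (\<lambda>_. unit_vec N r) \<in> carrier_mat N N" by (simp add: carrier_matI)
  from four_block_mat_mult_vec[OF _ this X uminus_carrier_mat[OF incidence_matrix_carrier] f \<theta>]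
  show ?thesis
    unfolding power_flow_mat_def using mat_of_row_fun_unit_vec_mult_vec[OF \<theta> r] X f \<theta>
    by (simp add: minus_add_uminus_vec[of _ E])
qed

lemma node_balance_offset:
  assumes f: "f \<in> carrier_vec E"
    and balance: "transpose_mat A *\<^sub>v f + vec N (\<lambda>_. t) = q"
  shows "real N * t = (\<Sum>k<N. q $ k)"
proof -
  have "(\<Sum>k<N. q $ k) = (\<Sum>k<N. (transpose_mat A *\<^sub>v f) $ k + t)"
    by (rule sum.cong) (auto simp: balance[symmetric])
  also have "\<dots> = real N * t"
    using sum_transpose_incidence_mult_vec[OF graph_ok f] by (simp add: sum.distrib)
  finally show ?thesis by simp
qed

lemma dc_pf_solution_iff:
  assumes p: "p \<in> carrier_vec N" and p_sum: "(\<Sum>i<N. p $ i) = 0" and r: "r < N"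
  shows "dc_pf_solution N E src tgt x p r \<theta>r f \<theta> \<longleftrightarrow>
    f \<in> carrier_vec E \<and> \<theta> \<in> carrier_vec N \<and>
    power_flow_mat (mat_diag E (\<lambda>e. x $ e)) r *\<^sub>v (f @\<^sub>v \<theta>) = (p + vec N (\<lambda>_. \<theta>r)) @\<^sub>v 0\<^sub>v E"
proof (cases "f \<in> carrier_vec E \<and> \<theta> \<in> carrier_vec N")
  case True
  then have f: "f \<in> carrier_vec E" and \<theta>: "\<theta> \<in> carrier_vec N" by auto
  let ?X = "mat_diag E (\<lambda>e. x $ e)"
  have "transpose_mat A *\<^sub>v f + vec N (\<lambda>_. \<theta> $ r) = p + vec N (\<lambda>_. \<theta>r) \<longleftrightarrow>
      transpose_mat A *\<^sub>v f = p \<and> \<theta> $ r = \<theta>r" (is "?balance \<longleftrightarrow> _")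
  proof
    assume ?balance
    then have "real N * \<theta> $ r = (\<Sum>k<N. (p + vec N (\<lambda>_. \<theta>r)) $ k)"
      by (rule node_balance_offset[OF f])
    also have "\<dots> = real N * \<theta>r" using p p_sum by (simp add: sum.distrib)
    finally have "\<theta> $ r = \<theta>r" using nodes_pos by simp
    with \<open>?balance\<close> show "transpose_mat A *\<^sub>v f = p \<and> \<theta> $ r = \<theta>r"
      using p f by (auto simp: vec_eq_iff)
  qed simp
  moreover have "?X *\<^sub>v f - A *\<^sub>v \<theta> = 0\<^sub>v E \<longleftrightarrow> ?X *\<^sub>v f = A *\<^sub>v \<theta>"
    using mult_mat_vec_carrier[OF mat_diag_dim f] by (intro minus_eq_zero_vec_iff) simp_all
  moreover have "(transpose_mat A *\<^sub>v f + vec N (\<lambda>_. \<theta> $ r)) @\<^sub>v (?X *\<^sub>v f - A *\<^sub>v \<theta>) =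
      (p + vec N (\<lambda>_. \<theta>r)) @\<^sub>v 0\<^sub>v E \<longleftrightarrow>
      ?balance \<and> ?X *\<^sub>v f - A *\<^sub>v \<theta> = 0\<^sub>v E"
    using p by (intro append_vec_eq[of _ N]) simp_all
  ultimately show ?thesis
    unfolding dc_pf_solution_def power_flow_mat_mult_vec[OF mat_diag_dim r f \<theta>] using f \<theta>
    by auto
qed (auto simp: dc_pf_solution_def)

lemma unique_dc_pf_solution_iff:
  assumes p: "p \<in> carrier_vec N" and p_sum: "(\<Sum>i<N. p $ i) = 0" and r: "r < N"
  shows "(\<exists>!(f, \<theta>). dc_pf_solution N E src tgt x p r \<theta>r f \<theta>) \<longleftrightarrow>
    mat_kernel (power_flow_mat (mat_diag E (\<lambda>e. x $ e)) r) = {0\<^sub>v (E + N)}"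
proof -
  let ?S = "power_flow_mat (mat_diag E (\<lambda>e. x $ e)) r"
  let ?b = "(p + vec N (\<lambda>_. \<theta>r)) @\<^sub>v 0\<^sub>v E"
  have S: "?S \<in> carrier_mat (E + N) (E + N)"
    using power_flow_mat_carrier[OF mat_diag_dim] by (simp add: add.commute)
  have "?b \<in> carrier_vec (N + E)" using p by (intro append_carrier_vec) simp_all
  then have b: "?b \<in> carrier_vec (E + N)" by (simp add: add.commute)
  have "(\<exists>!(f, \<theta>). dc_pf_solution N E src tgt x p r \<theta>r f \<theta>) \<longleftrightarrow>
      (\<exists>!(f, \<theta>). f \<in> carrier_vec E \<and> \<theta> \<in> carrier_vec N \<and> ?S *\<^sub>v (f @\<^sub>v \<theta>) = ?b)"
    by (simp only: dc_pf_solution_iff[OF assms])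
  also have "\<dots> \<longleftrightarrow> (\<exists>!v. v \<in> carrier_vec (E + N) \<and> ?S *\<^sub>v v = ?b)"
    by (rule ex1_append_vec_iff)
  also have "\<dots> \<longleftrightarrow> mat_kernel ?S = {0\<^sub>v (E + N)}"
    by (rule unique_solution_iff_mat_kernel_trivial[OF S b])
  finally show ?thesis .
qed

abbreviation loop_matrix :: "real mat \<Rightarrow> real mat" where
  "loop_matrix X \<equiv> transpose_mat Nm * X * Nm"

lemma loop_matrix_carrier:
  assumes "X \<in> carrier_mat E E"
  shows "loop_matrix X \<in> carrier_mat C C"
proof -
  have "transpose_mat Nm \<in> carrier_mat C E" using cycle_matrix_carrier by simp
  from mult_carrier_mat[OF mult_carrier_mat[OF this assms] cycle_matrix_carrier] show ?thesis .
qed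

lemma loop_matrix_mult_vec:
  assumes X: "X \<in> carrier_mat E E" and c: "c \<in> carrier_vec C"
  shows "loop_matrix X *\<^sub>v c = transpose_mat Nm *\<^sub>v (X *\<^sub>v (Nm *\<^sub>v c))"
proof -
  have NT: "transpose_mat Nm \<in> carrier_mat C E" using cycle_matrix_carrier by simp
  have "loop_matrix X *\<^sub>v c = (transpose_mat Nm * X) *\<^sub>v (Nm *\<^sub>v c)"
    using assoc_mult_mat_vec[OF mult_carrier_mat[OF NT X] cycle_matrix_carrier c] .
  also have "\<dots> = transpose_mat Nm *\<^sub>v (X *\<^sub>v (Nm *\<^sub>v c))"
    using assoc_mult_mat_vec[OF NT X, of "Nm *\<^sub>v c"] by simp
  finally show ?thesis .
qed

lemma mat_kernel_power_flow_mat_trivialI: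
  assumes X: "X \<in> carrier_mat E E" and r: "r < N"
    and loop: "mat_kernel (loop_matrix X) = {0\<^sub>v C}"
  shows "mat_kernel (power_flow_mat X r) = {0\<^sub>v (E + N)}"
  unfolding mat_kernel_eq_zero_iff[OF power_flow_mat_carrier[OF X]]
proof (intro ballI impI)
  fix v :: "real vec"
  assume v: "v \<in> carrier_vec (E + N)" and v0: "power_flow_mat X r *\<^sub>v v = 0\<^sub>v (N + E)"
  define f \<theta> where "f = vec_first v E" and "\<theta> = vec_last v N"
  have f: "f \<in> carrier_vec E" and \<theta>: "\<theta> \<in> carrier_vec N" unfolding f_def \<theta>_def by simp_all
  have v_eq: "v = f @\<^sub>v \<theta>" unfolding f_def \<theta>_def using v by (rule vec_first_last_append[symmetric])
  have "(transpose_mat A *\<^sub>v f + vec N (\<lambda>_. \<theta> $ r)) @\<^sub>v (X *\<^sub>v f - A *\<^sub>v \<theta>) = 0\<^sub>v N @\<^sub>v 0\<^sub>v E"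
    using v0 unfolding v_eq power_flow_mat_mult_vec[OF X r f \<theta>] zero_append_vec .
  moreover have "transpose_mat A *\<^sub>v f + vec N (\<lambda>_. \<theta> $ r) \<in> carrier_vec N" by simp
  ultimately have balance: "transpose_mat A *\<^sub>v f + vec N (\<lambda>_. \<theta> $ r) = 0\<^sub>v N"
    and law: "X *\<^sub>v f - A *\<^sub>v \<theta> = 0\<^sub>v E"
    by (simp_all only: append_vec_eq[OF _ zero_carrier_vec])
  have "real N * \<theta> $ r = 0" using node_balance_offset[OF f balance] by simp
  then have \<theta>r: "\<theta> $ r = 0" using nodes_pos by simp
  then have "transpose_mat A *\<^sub>v f = 0\<^sub>v N" using balance by (simp add: zero_vec_def[symmetric])
  then obtain c where c: "c \<in> carrier_vec C" and f_eq: "f = Nm *\<^sub>v c"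
    using transpose_incidence_kernel[OF f] by blast
  have Xf: "X *\<^sub>v f = A *\<^sub>v \<theta>"
    using law minus_eq_zero_vec_iff[of "X *\<^sub>v f" E "A *\<^sub>v \<theta>"] X f by simp
  have "loop_matrix X *\<^sub>v c = 0\<^sub>v C"
    unfolding loop_matrix_mult_vec[OF X c] f_eq[symmetric] Xf
    by (rule transpose_cycle_matrix_mult_incidence_vec[OF \<theta>])
  then have "c = 0\<^sub>v C" using c loop mat_kernel_eq_zero_iff[OF loop_matrix_carrier[OF X]] by blast
  then have f0: "f = 0\<^sub>v E" using f_eq by simp
  then have "A *\<^sub>v \<theta> = 0\<^sub>v E" using Xf X by simp
  then have "\<theta> $ k = 0" if "k < N" for k
    using incidence_kernel_const[OF connected \<theta> _ that r] \<theta>r by simp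
  then have "\<theta> = 0\<^sub>v N" using \<theta> by (intro eq_vecI) auto
  with f0 show "v = 0\<^sub>v (E + N)" by (simp add: v_eq zero_append_vec)
qed

lemma mat_kernel_loop_matrix_trivialI:
  assumes X: "X \<in> carrier_mat E E" and r: "r < N"
    and power_flow: "mat_kernel (power_flow_mat X r) = {0\<^sub>v (E + N)}"
  shows "mat_kernel (loop_matrix X) = {0\<^sub>v C}"
  unfolding mat_kernel_eq_zero_iff[OF loop_matrix_carrier[OF X]]
proof (intro ballI impI)
  fix c :: "real vec"
  assume c: "c \<in> carrier_vec C" and c0: "loop_matrix X *\<^sub>v c = 0\<^sub>v C"
  define f where "f = Nm *\<^sub>v c"
  have f: "f \<in> carrier_vec E" unfolding f_def by simp
  have "transpose_mat Nm *\<^sub>v (X *\<^sub>v f) = 0\<^sub>v C"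
    using c0 unfolding loop_matrix_mult_vec[OF X c] f_def .
  moreover have "X *\<^sub>v f \<in> carrier_vec E" using X f by simp
  ultimately obtain \<phi> where \<phi>: "\<phi> \<in> carrier_vec N" and Xf: "X *\<^sub>v f = A *\<^sub>v \<phi>"
    using transpose_cycle_matrix_kernel by blast
  define \<theta> where "\<theta> = \<phi> - vec N (\<lambda>_. \<phi> $ r)"
  have \<theta>: "\<theta> \<in> carrier_vec N" unfolding \<theta>_def using \<phi> by simp
  have "A *\<^sub>v \<theta> = A *\<^sub>v \<phi>"
    unfolding \<theta>_def using \<phi> incidence_matrix_mult_const[OF graph_ok]
    by (simp add: mult_minus_distrib_mat_vec[of A E N])
  then have law: "X *\<^sub>v f - A *\<^sub>v \<theta> = 0\<^sub>v E" using Xf by simp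
  have "\<theta> $ r = 0" unfolding \<theta>_def using \<phi> r by simp
  moreover have "transpose_mat A *\<^sub>v f = 0\<^sub>v N"
    unfolding f_def by (rule transpose_incidence_mult_cycle_vec[OF c])
  ultimately have balance: "transpose_mat A *\<^sub>v f + vec N (\<lambda>_. \<theta> $ r) = 0\<^sub>v N"
    by (simp add: zero_vec_def[symmetric])
  have "power_flow_mat X r *\<^sub>v (f @\<^sub>v \<theta>) = 0\<^sub>v (N + E)"
    unfolding power_flow_mat_mult_vec[OF X r f \<theta>] balance law by (rule zero_append_vec)
  moreover have "f @\<^sub>v \<theta> \<in> carrier_vec (E + N)" using f \<theta> by (rule append_carrier_vec)
  ultimately have "f @\<^sub>v \<theta> = 0\<^sub>v E @\<^sub>v 0\<^sub>v N"
    using power_flow mat_kernel_eq_zero_iff[OF power_flow_mat_carrier[OF X]]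
    by (simp add: zero_append_vec)
  then have "Nm *\<^sub>v c = 0\<^sub>v E"
    unfolding f_def by (simp only: append_vec_eq[OF cycle_matrix_mult_vec_carrier zero_carrier_vec])
  then show "c = 0\<^sub>v C" using c mat_kernel_cycle_matrix mat_kernel_eq_zero_iff[OF cycle_matrix_carrier] by blast
qed

end

theorem proposition1:
  fixes N E :: nat and src tgt :: "nat \<Rightarrow> nat"
    and x p :: "real vec" and r :: nat and \<theta>r :: real and Nm :: "real mat"
  assumes "connected_graph N E src tgt"
    and "x \<in> carrier_vec E"
    and "p \<in> carrier_vec N"
    and "(\<Sum>i<N. p $ i) = 0"
    and "r < N"
    and "cycle_matrix N E src tgt Nm"
  shows "(\<exists>!(f, \<theta>). dc_pf_solution N E src tgt x p r \<theta>r f \<theta>) \<longleftrightarrow>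
         (\<not> has_cycle E src tgt \<or>
          (has_cycle E src tgt \<and>
           invertible_mat (transpose_mat Nm * mat_diag E (\<lambda>e. x $ e) * Nm)))"
proof -
  interpret cycle_matrix_graph N E src tgt Nm
    using assms(1,6) by unfold_locales
  let ?X = "mat_diag E (\<lambda>e. x $ e)"
  have loop: "loop_matrix ?X \<in> carrier_mat C C"
    by (rule loop_matrix_carrier[OF mat_diag_dim])
  have "(\<exists>!(f, \<theta>). dc_pf_solution N E src tgt x p r \<theta>r f \<theta>) \<longleftrightarrow>
      mat_kernel (power_flow_mat ?X r) = {0\<^sub>v (E + N)}"
    by (rule unique_dc_pf_solution_iff[OF assms(3-5)])
  also have "\<dots> \<longleftrightarrow> mat_kernel (loop_matrix ?X) = {0\<^sub>v C}"
    using mat_kernel_power_flow_mat_trivialI[OF mat_diag_dim assms(5)]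
      mat_kernel_loop_matrix_trivialI[OF mat_diag_dim assms(5)] by blast
  finally have unique_iff: "(\<exists>!(f, \<theta>). dc_pf_solution N E src tgt x p r \<theta>r f \<theta>) \<longleftrightarrow>
      invertible_mat (loop_matrix ?X)"
    unfolding invertible_mat_iff_mat_kernel_trivial[OF loop] .
  have "invertible_mat (loop_matrix ?X)" if "\<not> has_cycle E src tgt"
    using mat_kernel_no_columns[of _ C] loop no_cycle_imp_no_cycle_columns[OF that]
      invertible_mat_iff_mat_kernel_trivial[OF loop] by simp
  with unique_iff show ?thesis by blast
qed

end
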